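(* Let $d\ge2$, let $D\subset\mathbb{R}^d$ be open and connected, and let $S_1,\dots,S_N\subset\mathbb{R}^d$ ($N\ge1$) be closed bounded sets. Suppose that one of the following holds: (i) there is an upper semicontinuous function $g:\mathbb{R}^{d-1}\to\mathbb{R}$ with $D=\{(x_1,\dots,x_d):x_1>g(x_2,\dots,x_d)\}$, and all $S_k$ are convex; or (ii) $D=\{(x_1,\dots,x_d):x_1>0,\ x_2^2+\dots+x_d^2<1\}$, each $S_k$ is a (closed) ball, and the diameter $\rho_k$ of $S_k$ satisfies $\rho_k<1$ for $k=1,\dots,N$. Then the configuration space ${\bf D}$ is pathwise connected.
   Context: For $y\in\mathbb{R}^d$ write $S_k(y)=S_k+y$. The configuration space ${\bf D}\subset\mathbb{R}^{Nd}$ is the set of all ${\bf x}=(x^1,\dots,x^N)$, $x^k\in\mathbb{R}^d$, such that $S_k(x^k)\subset D$ for all $k=1,\dots,N$ and $S_j(x^j)\cap S_k(x^k)=\emptyset$ for all $j\neq k$. *)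

theory Defs
  imports "HOL-Analysis.Analysis"
begin

text \<open>Points of R^d are modelled as pairs (x1, x') in real \<times> 'b, where 'b is a
Euclidean space of dimension d-1 \<ge> 1 (so d \<ge> 2).  The N bodies are indexed by
a finite type 'n; a configuration is a vector in (real \<times> 'b)^'n = R^(Nd).\<close>

definition upper_semicontinuous :: "('a::topological_space \<Rightarrow> real) \<Rightarrow> bool" where
  "upper_semicontinuous g \<longleftrightarrow> (\<forall>c. open {y. g y < c})"

definition translate :: "'a::real_vector set \<Rightarrow> 'a \<Rightarrow> 'a set" where
  "translate S y = (\<lambda>s. s + y) ` S"

definition config_space ::
  "'a::real_vector set \<Rightarrow> ('n::finite \<Rightarrow> 'a set) \<Rightarrow> ('a ^ 'n) set" where
  "config_space D S = {x. (\<forall>k. translate (S k) (x $ k) \<subseteq> D) \<and>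
      (\<forall>j k. j \<noteq> k \<longrightarrow> translate (S j) (x $ j) \<inter> translate (S k) (x $ k) = {})}"

end

theory Submission
  imports Defs
begin

text \<open>Track a reference point in each body. In both cases any configuration can be moved,
  inside the configuration space, to one whose reference points lie in a high half-cylinder
  and are pairwise further apart than the bodies are large. For convex bodies above a graph:
  lift everything far up, then spread the reference points out by a homothety, which keeps
  convex bodies disjoint. For balls in the half-tube: push the balls along the axis by amounts
  compatible with the order of their heights, so that no two come closer and the heights end
  up well separated, and then slide every centre onto the axis.
  Configurations of the target kind lie in the configuration space and form a path-connected
  set: after separating the heights the same way, the points can be sorted into a fixed order
  by letting them pass each other on opposite sides of the cylinder, which is wide enough
  for two bodies side by side.\<close>

lemma path_component_segmentI:
  fixes a v :: "'a::real_normed_vector"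
  assumes "\<And>t. 0 \<le> t \<Longrightarrow> t \<le> 1 \<Longrightarrow> a + t *\<^sub>R v \<in> S"
  shows "path_component S a (a + v)"
proof (rule path_component_linepath, rule subsetI)
  fix p assume "p \<in> closed_segment a (a + v)"
  then obtain t where "0 \<le> t" "t \<le> 1" "p = a + t *\<^sub>R v"
    unfolding closed_segment_def by (auto simp: algebra_simps)
  then show "p \<in> S" using assms by blast
qed

lemma path_component_preimage_translation:
  fixes c :: "'a::real_normed_vector"
  assumes "path_component P (x + c) y"
  shows "path_component {z. z + c \<in> P} x (y - c)"
proof -
  obtain g where "path g" "path_image g \<subseteq> P" "pathstart g = x + c" "pathfinish g = y"
    using assms unfolding path_component_def by blast
  then show ?thesis
    unfolding path_component_def
    by (intro exI[of _ "\<lambda>t. g t - c"])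
       (auto simp: path_def pathstart_def pathfinish_def path_image_def intro!: continuous_intros)
qed

lemma path_connected_preimage_translation:
  fixes c :: "'a::real_normed_vector"
  assumes "path_connected P"
  shows "path_connected {z. z + c \<in> P}"
proof -
  have "{z. z + c \<in> P} = (\<lambda>z. z - c) ` P"
    by (auto simp: image_iff) (metis add_diff_cancel)
  then show ?thesis
    using assms by (auto intro!: path_connected_continuous_image continuous_intros)
qed

lemma path_component_via_path_connected_subset:
  assumes "G \<subseteq> X" "path_connected G" "x' \<in> G" "y' \<in> G"
    and "path_component X x x'" "path_component X y y'"
  shows "path_component X x y"
proof -
  have "path_component X x' y'"
    using assms(1-4) path_component_of_subset path_connected_component by blast
  then show ?thesis using assms(5,6) by (meson path_component_sym path_component_trans)
qed

lemma path_connected_if_reaches_subset: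
  assumes "G \<subseteq> X" "path_connected G" "\<And>x. x \<in> X \<Longrightarrow> \<exists>y\<in>G. path_component X x y"
  shows "path_connected X"
  unfolding path_connected_component
  using assms path_component_via_path_connected_subset[OF assms(1,2)] by metis

lemma dist_le_dist_add_fst:
  fixes a b :: "real \<times> 'b::real_normed_vector"
  assumes "0 \<le> (fst a - fst b) * (s - t)"
  shows "dist a b \<le> dist (a + (s, 0)) (b + (t, 0))"
proof -
  have "(fst a + s - (fst b + t))\<^sup>2 = (fst a - fst b)\<^sup>2 + 2 * ((fst a - fst b) * (s - t)) + (s - t)\<^sup>2"
    by (simp add: power2_eq_square algebra_simps)
  then have "(fst a - fst b)\<^sup>2 \<le> (fst a + s - (fst b + t))\<^sup>2"
    using assms by simp
  then show ?thesis
    by (cases a, cases b) (simp add: dist_Pair_Pair dist_real_def)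
qed

lemma norm_snd_le_norm: "norm (snd p) \<le> norm p"
  by (metis norm_snd_le prod.collapse)

lemma dist_gt_if_coordinate_gt:
  fixes a b :: "real \<times> 'b::real_normed_vector"
  assumes "r < \<bar>fst a - fst b\<bar> \<or> r < norm (snd a - snd b)"
  shows "r < dist a b"
  using assms dist_fst_le[of a b] dist_snd_le[of a b] by (auto simp: dist_real_def dist_norm)

lemma abs_add_scaled_ge:
  fixes a b T :: real
  assumes "0 \<le> a * b" "1 \<le> \<bar>b\<bar>" "0 \<le> T"
  shows "T \<le> \<bar>a + T * b\<bar>"
proof -
  have "T \<le> T * \<bar>b\<bar>" using assms(2,3) by (simp add: mult_le_cancel_left1)
  also have "T * \<bar>b\<bar> \<le> \<bar>a + T * b\<bar>"
    using assms by (auto simp: abs_if zero_le_mult_iff mult_less_0_iff)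
  finally show ?thesis .
qed

lemma exists_rank_weights:
  fixes f :: "'n::finite \<Rightarrow> real"
  obtains w :: "'n \<Rightarrow> real" where "\<And>k. 1 \<le> w k"
    and "\<And>j k. 0 \<le> (f j - f k) * (w j - w k)" and "\<And>j k. j \<noteq> k \<Longrightarrow> 1 \<le> \<bar>w j - w k\<bar>"
proof -
  obtain idx :: "'n \<Rightarrow> nat" where idx: "bij_betw idx UNIV {0..<CARD('n)}"
    using ex_bij_betw_finite_nat[of "UNIV :: 'n set"] by auto
  define below where "below k = card {j. f j < f k}" for k
  define w where "w k = real (CARD('n) * below k + idx k) + 1" for k
  have idx_bound: "idx k < CARD('n)" for k using idx by (auto simp: bij_betw_def)
  have less: "w j + 1 \<le> w k" if "f j < f k" for j k
  proof -
    have "{i. f i < f j} \<subset> {i. f i < f k}" using that by auto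
    then have "Suc (below j) \<le> below k" unfolding below_def by (simp add: psubset_card_mono Suc_leI)
    then have "CARD('n) * below j + CARD('n) \<le> CARD('n) * below k"
      by (metis add.commute mult_Suc_right mult_le_mono2)
    then show ?thesis unfolding w_def using idx_bound[of j] by linarith
  qed
  have tie: "1 \<le> \<bar>w j - w k\<bar>" if "f j = f k" "j \<noteq> k" for j k
  proof -
    have "idx j \<noteq> idx k" using idx that(2) by (auto simp: bij_betw_def dest: injD)
    then show ?thesis using that(1) unfolding w_def below_def by auto
  qed
  show thesis
  proof
    show "1 \<le> w k" for k unfolding w_def by simp
    show "0 \<le> (f j - f k) * (w j - w k)" for j k
      by (cases "f j" "f k" rule: linorder_cases)
         (use less[of j k] less[of k j] in \<open>auto intro: mult_nonpos_nonpos\<close>)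
    show "1 \<le> \<bar>w j - w k\<bar>" if "j \<noteq> k" for j k
      by (cases "f j" "f k" rule: linorder_cases) (use less[of j k] less[of k j] tie that in auto)
  qed
qed

lemma exists_spacing_push:
  fixes f :: "'n::finite \<Rightarrow> real"
  assumes "0 \<le> T"
  obtains w where "\<And>k. T \<le> w k" and "\<And>j k. 0 \<le> (f j - f k) * (w j - w k)"
    and "\<And>j k. j \<noteq> k \<Longrightarrow> T \<le> \<bar>(f j + w j) - (f k + w k)\<bar>"
proof -
  obtain \<rho> where \<rho>: "\<And>k. 1 \<le> \<rho> k" "\<And>j k. 0 \<le> (f j - f k) * (\<rho> j - \<rho> k)"
    "\<And>j k. j \<noteq> k \<Longrightarrow> 1 \<le> \<bar>\<rho> j - \<rho> k\<bar>"
    using exists_rank_weights[of f] by metis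
  show thesis
  proof
    show "T \<le> T * \<rho> k" for k using \<rho>(1)[of k] assms by (simp add: mult_le_cancel_left1)
    show "0 \<le> (f j - f k) * (T * \<rho> j - T * \<rho> k)" for j k
    proof -
      have "0 \<le> T * ((f j - f k) * (\<rho> j - \<rho> k))" using \<rho>(2)[of j k] assms by simp
      also have "\<dots> = (f j - f k) * (T * \<rho> j - T * \<rho> k)" by (simp add: algebra_simps)
      finally show ?thesis .
    qed
    show "T \<le> \<bar>(f j + T * \<rho> j) - (f k + T * \<rho> k)\<bar>" if "j \<noteq> k" for j k
    proof -
      have "T \<le> \<bar>(f j - f k) + T * (\<rho> j - \<rho> k)\<bar>"
        using abs_add_scaled_ge[OF \<rho>(2) \<rho>(3)[OF that] assms] .
      also have "(f j - f k) + T * (\<rho> j - \<rho> k) = (f j + T * \<rho> j) - (f k + T * \<rho> k)"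
        by (simp add: algebra_simps)
      finally show ?thesis .
    qed
  qed
qed

section \<open>Configurations of points\<close>

text \<open>Indices outside \<open>K\<close> will stand for empty bodies, which impose no constraint.\<close>

definition point_configs ::
  "'n set \<Rightarrow> ('n \<Rightarrow> 'a set) \<Rightarrow> ('n \<Rightarrow> 'n \<Rightarrow> real) \<Rightarrow> ('a::metric_space ^ 'n::finite) set" where
  "point_configs K U \<delta> = {A. (\<forall>k\<in>K. A $ k \<in> U k) \<and>
      (\<forall>j\<in>K. \<forall>k\<in>K. j \<noteq> k \<longrightarrow> \<delta> j k < dist (A $ j) (A $ k))}"

lemma point_configsI:
  assumes "\<And>k. k \<in> K \<Longrightarrow> A $ k \<in> U k"
    and "\<And>j k. j \<in> K \<Longrightarrow> k \<in> K \<Longrightarrow> j \<noteq> k \<Longrightarrow> \<delta> j k < dist (A $ j) (A $ k)"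
  shows "A \<in> point_configs K U \<delta>"
  using assms unfolding point_configs_def by auto

lemma point_configsD:
  assumes "A \<in> point_configs K U \<delta>"
  shows "k \<in> K \<Longrightarrow> A $ k \<in> U k"
    and "j \<in> K \<Longrightarrow> k \<in> K \<Longrightarrow> j \<noteq> k \<Longrightarrow> \<delta> j k < dist (A $ j) (A $ k)"
  using assms unfolding point_configs_def by auto

lemma point_configs_mono:
  assumes "\<And>k. k \<in> K \<Longrightarrow> U k \<subseteq> U' k"
  shows "point_configs K U \<delta> \<subseteq> point_configs K U' \<delta>"
  using assms unfolding point_configs_def by auto

lemma path_component_point_configs_push_up:
  fixes A :: "(real \<times> 'b::real_normed_vector) ^ 'n::finite"
  assumes A: "A \<in> point_configs K U \<delta>"
    and up: "\<And>k p s. k \<in> K \<Longrightarrow> p \<in> U k \<Longrightarrow> 0 \<le> s \<Longrightarrow> p + (s, 0) \<in> U k"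
    and w: "\<And>k. 0 \<le> w k" "\<And>j k. 0 \<le> (fst (A $ j) - fst (A $ k)) * (w j - w k)"
  shows "path_component (point_configs K U \<delta>) A (A + (\<chi> k. (w k, 0)))"
proof (rule path_component_segmentI)
  fix t :: real assume t: "0 \<le> t" "t \<le> 1"
  have "(\<chi> k. A $ k + (t * w k, 0)) \<in> point_configs K U \<delta>"
  proof (intro point_configsI, unfold vec_lambda_beta)
    fix k assume "k \<in> K"
    then show "A $ k + (t * w k, 0) \<in> U k"
      using t w(1)[of k] by (intro up point_configsD(1)[OF A]) auto
  next
    fix j k assume jk: "j \<in> K" "k \<in> K" "j \<noteq> k"
    have "0 \<le> t * ((fst (A $ j) - fst (A $ k)) * (w j - w k))"
      using t w(2)[of j k] by simp
    also have "\<dots> = (fst (A $ j) - fst (A $ k)) * (t * w j - t * w k)"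
      by (simp add: algebra_simps)
    finally have "dist (A $ j) (A $ k) \<le> dist (A $ j + (t * w j, 0)) (A $ k + (t * w k, 0))"
      by (rule dist_le_dist_add_fst)
    then show "\<delta> j k < dist (A $ j + (t * w j, 0)) (A $ k + (t * w k, 0))"
      using point_configsD(2)[OF A jk] by linarith
  qed
  moreover have "A + t *\<^sub>R (\<chi> k. (w k, 0)) = (\<chi> k. A $ k + (t * w k, 0))"
    by (simp add: vec_eq_iff)
  ultimately show "A + t *\<^sub>R (\<chi> k. (w k, 0)) \<in> point_configs K U \<delta>" by simp
qed

lemma path_component_point_configs_same_heights:
  fixes A B :: "(real \<times> 'b::real_normed_vector) ^ 'n::finite"
  assumes conv: "\<And>k. k \<in> K \<Longrightarrow> convex (U k)"
    and mem: "\<And>k. k \<in> K \<Longrightarrow> A $ k \<in> U k" "\<And>k. k \<in> K \<Longrightarrow> B $ k \<in> U k"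
    and heights: "\<And>k. fst (B $ k) = fst (A $ k)"
    and spaced: "\<And>j k. j \<in> K \<Longrightarrow> k \<in> K \<Longrightarrow> j \<noteq> k \<Longrightarrow> \<delta> j k < \<bar>fst (A $ j) - fst (A $ k)\<bar>"
  shows "path_component (point_configs K U \<delta>) A B"
proof -
  have "path_component (point_configs K U \<delta>) A (A + (B - A))"
  proof (rule path_component_segmentI)
    fix t :: real assume t: "0 \<le> t" "t \<le> 1"
    have "(\<chi> k. (1 - t) *\<^sub>R A $ k + t *\<^sub>R B $ k) \<in> point_configs K U \<delta>"
    proof (intro point_configsI, unfold vec_lambda_beta)
      fix k assume "k \<in> K"
      then show "(1 - t) *\<^sub>R A $ k + t *\<^sub>R B $ k \<in> U k"
        using conv mem t by (intro convexD_alt) auto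
    next
      fix j k assume jk: "j \<in> K" "k \<in> K" "j \<noteq> k"
      have "fst ((1 - t) *\<^sub>R A $ i + t *\<^sub>R B $ i) = fst (A $ i)" for i
        using heights[of i] by (simp add: algebra_simps)
      then have "\<bar>fst (A $ j) - fst (A $ k)\<bar>
          \<le> dist ((1 - t) *\<^sub>R A $ j + t *\<^sub>R B $ j) ((1 - t) *\<^sub>R A $ k + t *\<^sub>R B $ k)"
        by (metis dist_fst_le dist_real_def)
      then show "\<delta> j k < dist ((1 - t) *\<^sub>R A $ j + t *\<^sub>R B $ j) ((1 - t) *\<^sub>R A $ k + t *\<^sub>R B $ k)"
        using spaced[OF jk] by linarith
    qed
    moreover have "A + t *\<^sub>R (B - A) = (\<chi> k. (1 - t) *\<^sub>R A $ k + t *\<^sub>R B $ k)"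
      by (simp add: vec_eq_iff algebra_simps)
    ultimately show "A + t *\<^sub>R (B - A) \<in> point_configs K U \<delta>" by simp
  qed
  then show ?thesis by simp
qed

lemma path_component_point_configs_shift:
  fixes A :: "('a::real_normed_vector) ^ 'n::finite"
  assumes A: "A \<in> point_configs K U \<delta>"
    and inside: "\<And>k t. k \<in> K \<Longrightarrow> 0 \<le> t \<Longrightarrow> t \<le> 1 \<Longrightarrow> A $ k + t *\<^sub>R v \<in> U k"
  shows "path_component (point_configs K U \<delta>) A (A + (\<chi> k. v))"
proof (rule path_component_segmentI)
  fix t :: real assume "0 \<le> t" "t \<le> 1"
  then have "(\<chi> k. A $ k + t *\<^sub>R v) \<in> point_configs K U \<delta>"
    using inside point_configsD[OF A] by (intro point_configsI) simp_all
  moreover have "A + t *\<^sub>R (\<chi> k. v) = (\<chi> k. A $ k + t *\<^sub>R v)"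
    by (simp add: vec_eq_iff)
  ultimately show "A + t *\<^sub>R (\<chi> k. v) \<in> point_configs K U \<delta>" by simp
qed

lemma point_configs_reach_levels:
  fixes A :: "(real \<times> 'b::real_normed_vector) ^ 'n::finite"
  assumes A: "A \<in> point_configs K U \<delta>"
    and up: "\<And>k p s. k \<in> K \<Longrightarrow> p \<in> U k \<Longrightarrow> 0 \<le> s \<Longrightarrow> p + (s, 0) \<in> U k"
    and conv: "\<And>k. k \<in> K \<Longrightarrow> convex (U k)"
    and T: "0 \<le> T" "\<And>j k. j \<in> K \<Longrightarrow> k \<in> K \<Longrightarrow> j \<noteq> k \<Longrightarrow> \<delta> j k < T"
    and target: "\<And>k y. k \<in> K \<Longrightarrow> fst (A $ k) \<le> y \<Longrightarrow> (y, v k) \<in> U k"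
  obtains hs where "\<And>k. fst (A $ k) + T \<le> hs k" and "\<And>j k. j \<noteq> k \<Longrightarrow> T \<le> \<bar>hs j - hs k\<bar>"
    and "path_component (point_configs K U \<delta>) A (\<chi> k. (hs k, v k))"
proof -
  obtain w where w: "\<And>k. T \<le> w k" "\<And>j k. 0 \<le> (fst (A $ j) - fst (A $ k)) * (w j - w k)"
    "\<And>j k. j \<noteq> k \<Longrightarrow> T \<le> \<bar>(fst (A $ j) + w j) - (fst (A $ k) + w k)\<bar>"
    using exists_spacing_push[OF T(1), of "\<lambda>k. fst (A $ k)"] by metis
  define hs where "hs k = fst (A $ k) + w k" for k
  define A' where "A' = A + (\<chi> k. (w k, 0))"
  have raised: "fst (A $ k) + T \<le> hs k" for k
    unfolding hs_def using w(1)[of k] by simp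
  have "path_component (point_configs K U \<delta>) A A'"
    unfolding A'_def using T(1) w(1,2) order_trans
    by (intro path_component_point_configs_push_up[OF A up]) blast+
  moreover have "path_component (point_configs K U \<delta>) A' (\<chi> k. (hs k, v k))"
  proof (rule path_component_point_configs_same_heights[OF conv])
    show "A' $ k \<in> U k" if "k \<in> K" for k
      unfolding A'_def using that w(1)[of k] T(1) by (simp add: up point_configsD(1)[OF A])
    show "(\<chi> k. (hs k, v k)) $ k \<in> U k" if "k \<in> K" for k
      using target[OF that] raised[of k] T(1) by simp
    show "fst ((\<chi> k. (hs k, v k)) $ k) = fst (A' $ k)" for k
      unfolding A'_def hs_def by simp
    show "\<delta> j k < \<bar>fst (A' $ j) - fst (A' $ k)\<bar>" if "j \<in> K" "k \<in> K" "j \<noteq> k" for j k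
      using T(2)[OF that] w(3)[OF that(3)] unfolding A'_def by simp
  qed
  ultimately have "path_component (point_configs K U \<delta>) A (\<chi> k. (hs k, v k))"
    by (rule path_component_trans)
  moreover have "T \<le> \<bar>hs j - hs k\<bar>" if "j \<noteq> k" for j k
    using w(3)[OF that] unfolding hs_def .
  ultimately show thesis using raised that by blast
qed

section \<open>Sorting points in a half-cylinder\<close>

definition half_cylinder :: "real \<Rightarrow> real \<Rightarrow> (real \<times> 'b::real_normed_vector) set" where
  "half_cylinder h L = {p. h \<le> fst p \<and> norm (snd p) \<le> L}"

lemma convex_half_cylinder: "convex (half_cylinder h L)"
proof -
  have "half_cylinder h L = fst -` {h..} \<inter> snd -` cball 0 L"
    by (auto simp: half_cylinder_def)
  then show ?thesis
    by (metis convex_Int convex_linear_vimage convex_cball convex_real_interval(1)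
        bounded_linear.linear bounded_linear_fst bounded_linear_snd)
qed

lemma half_cylinder_mono: "h' \<le> h \<Longrightarrow> L \<le> L' \<Longrightarrow> half_cylinder h L \<subseteq> half_cylinder h' L'"
  by (auto simp: half_cylinder_def)

abbreviation cylinder_configs ::
  "real \<Rightarrow> real \<Rightarrow> real \<Rightarrow> 'n set \<Rightarrow> ((real \<times> 'b::real_normed_vector) ^ 'n::finite) set" where
  "cylinder_configs h L R K \<equiv> point_configs K (\<lambda>_. half_cylinder h L) (\<lambda>_ _. 2 * R)"

locale column_sort =
  fixes h L R T :: real and K :: "'n::finite set" and e :: "'b::real_normed_vector"
    and idx :: "'n \<Rightarrow> nat" and hs :: "'n \<Rightarrow> real"
  assumes radii: "0 \<le> R" "R < L" "2 * R < T"
    and unit: "norm e = 1"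
    and idx: "bij_betw idx UNIV {..<CARD('n)}"
    and above: "\<And>k. k \<in> K \<Longrightarrow> h \<le> hs k"
    and spaced: "\<And>j k. j \<noteq> k \<Longrightarrow> T \<le> \<bar>hs j - hs k\<bar>"
begin

definition base :: real where "base = max h (Max (range hs)) + T"

definition slot :: "'n \<Rightarrow> real" where "slot k = base + T * real (idx k)"

text \<open>The points start at heights \<open>hs k\<close> in the column \<open>L *\<^sub>R e\<close>. In decreasing order of
  \<open>idx\<close>, each point moves sideways to the column \<open>- (L *\<^sub>R e)\<close> and then up to its \<open>slot\<close>,
  above all the heights \<open>hs\<close>. \<open>stage m\<close> is the configuration once the points with
  \<open>m \<le> idx k\<close> have moved; \<open>moving m y v\<close> is \<open>stage (Suc m)\<close> with the point of index \<open>m\<close>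
  placed at \<open>(y, v)\<close>.\<close>

definition moving :: "nat \<Rightarrow> real \<Rightarrow> 'b \<Rightarrow> (real \<times> 'b) ^ 'n" where
  "moving m y v = (\<chi> k. if idx k = m then (y, v)
     else if m < idx k then (slot k, - (L *\<^sub>R e)) else (hs k, L *\<^sub>R e))"

definition stage :: "nat \<Rightarrow> (real \<times> 'b) ^ 'n" where
  "stage m = (\<chi> k. if m \<le> idx k then (slot k, - (L *\<^sub>R e)) else (hs k, L *\<^sub>R e))"

lemma T_pos: "0 < T"
  using radii by linarith

lemma idx_inj: "idx j = idx k \<Longrightarrow> j = k"
  using idx by (auto simp: bij_betw_def dest: injD)

lemma idx_surj: "m < CARD('n) \<Longrightarrow> \<exists>k. idx k = m"
  using idx unfolding bij_betw_def by (metis lessThan_iff rangeE)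

lemma idx_less: "idx k < CARD('n)"
  using idx by (auto simp: bij_betw_def)

lemma hs_below_base: "hs k + T \<le> base"
proof -
  have "hs k \<le> Max (range hs)" by (rule Max_ge) auto
  then show ?thesis unfolding base_def by linarith
qed

lemma h_below_base: "h \<le> base"
  using T_pos unfolding base_def by linarith

lemma base_le_slot: "base \<le> slot k"
  using T_pos unfolding slot_def by simp

lemma hs_below_slot: "hs k \<le> slot k"
  using hs_below_base[of k] base_le_slot[of k] T_pos by linarith

lemma slot_spaced: "idx j < idx k \<Longrightarrow> slot j + T \<le> slot k"
proof -
  assume "idx j < idx k"
  then have "T * (real (idx j) + 1) \<le> T * real (idx k)"
    using T_pos by (intro mult_left_mono) auto
  then show ?thesis unfolding slot_def by (simp add: algebra_simps)
qed

lemma abs_L [simp]: "\<bar>L\<bar> = L"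
  using radii by linarith

declare unit [simp]

lemma norm_column_difference [simp]:
  "norm (- (L *\<^sub>R e) - L *\<^sub>R e) = 2 * L" "norm (L *\<^sub>R e - - (L *\<^sub>R e)) = 2 * L"
proof -
  have "- (L *\<^sub>R e) - L *\<^sub>R e = - ((2 * L) *\<^sub>R e)" "L *\<^sub>R e - - (L *\<^sub>R e) = (2 * L) *\<^sub>R e"
    by (simp_all add: algebra_simps flip: scaleR_2)
  then show "norm (- (L *\<^sub>R e) - L *\<^sub>R e) = 2 * L" "norm (L *\<^sub>R e - - (L *\<^sub>R e)) = 2 * L"
    using radii by simp_all
qed

lemma level_spaced:
  assumes "j \<noteq> k"
  shows "T \<le> \<bar>(if m < idx j then slot j else hs j) - (if m < idx k then slot k else hs k)\<bar>"
proof -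
  have "idx j \<noteq> idx k" using assms idx_inj by blast
  then consider "idx j < idx k" | "idx k < idx j" by linarith
  then have "T \<le> \<bar>slot j - slot k\<bar>" by cases (use slot_spaced in force)+
  moreover have "T \<le> \<bar>slot i - hs i'\<bar>" for i i'
    using base_le_slot[of i] hs_below_base[of i'] by linarith
  ultimately show ?thesis
    using spaced[OF assms] by (auto simp: abs_minus_commute)
qed

lemma moving_spaced:
  assumes k0: "idx k0 = m"
    and pos: "(y = hs k0 \<and> norm v \<le> L) \<or> (v = - (L *\<^sub>R e) \<and> hs k0 \<le> y \<and> y \<le> slot k0)"
    and "j \<noteq> k" "idx k \<noteq> m"
  shows "2 * R < dist (moving m y v $ j) (moving m y v $ k)"
proof (rule dist_gt_if_coordinate_gt)
  have y_le: "y \<le> slot k0" using pos hs_below_slot[of k0] by auto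
  show "2 * R < \<bar>fst (moving m y v $ j) - fst (moving m y v $ k)\<bar> \<or>
      2 * R < norm (snd (moving m y v $ j) - snd (moving m y v $ k))"
  proof (cases "idx j = m")
    case True
    then have "j = k0" using k0 idx_inj by blast
    show ?thesis
    proof (cases "m < idx k")
      case True
      then have "y + T \<le> slot k" using slot_spaced[of k0 k] k0 y_le by linarith
      then show ?thesis using True \<open>idx j = m\<close> radii by (simp add: moving_def)
    next
      case False
      then show ?thesis
        using pos spaced[of k0 k] \<open>j = k0\<close> \<open>j \<noteq> k\<close> \<open>idx j = m\<close> \<open>idx k \<noteq> m\<close> radii
        by (auto simp: moving_def)
    qed
  next
    case False
    have "fst (moving m y v $ i) = (if m < idx i then slot i else hs i)" if "idx i \<noteq> m" for i
      using that by (simp add: moving_def)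
    then have "T \<le> \<bar>fst (moving m y v $ j) - fst (moving m y v $ k)\<bar>"
      using level_spaced[OF \<open>j \<noteq> k\<close>, of m] False \<open>idx k \<noteq> m\<close> by simp
    then show ?thesis using radii by (intro disjI1) linarith
  qed
qed

lemma moving_mem:
  assumes k0: "idx k0 = m"
    and pos: "(y = hs k0 \<and> norm v \<le> L) \<or> (v = - (L *\<^sub>R e) \<and> hs k0 \<le> y \<and> y \<le> slot k0)"
  shows "moving m y v \<in> cylinder_configs h L R K"
proof (rule point_configsI)
  fix k assume "k \<in> K"
  then show "moving m y v $ k \<in> half_cylinder h L"
    using k0 pos idx_inj[of k k0] above[of k] h_below_base base_le_slot[of k]
    by (auto simp: moving_def half_cylinder_def)
next
  fix j k assume "j \<in> K" "k \<in> K" "j \<noteq> k"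
  show "2 * R < dist (moving m y v $ j) (moving m y v $ k)"
  proof (cases "idx k = m")
    case True
    then have "idx j \<noteq> m" using \<open>j \<noteq> k\<close> idx_inj by metis
    then show ?thesis
      using moving_spaced[OF k0 pos, of k j] \<open>j \<noteq> k\<close> by (simp add: dist_commute)
  qed (use moving_spaced[OF k0 pos] \<open>j \<noteq> k\<close> in auto)
qed

lemma path_component_moving:
  assumes "\<And>t. 0 \<le> t \<Longrightarrow> t \<le> 1 \<Longrightarrow> moving m (y + t * (y' - y)) (v + t *\<^sub>R (v' - v)) \<in> V"
  shows "path_component V (moving m y v) (moving m y' v')"
proof -
  have "moving m y v + t *\<^sub>R (moving m y' v' - moving m y v)
      = moving m (y + t * (y' - y)) (v + t *\<^sub>R (v' - v))" for t
    by (simp add: moving_def vec_eq_iff algebra_simps)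
  then show ?thesis
    using path_component_segmentI[of "moving m y v" "moving m y' v' - moving m y v" V] assms
    by simp
qed

lemma stage_eq_moving:
  assumes "idx k0 = m"
  shows "stage (Suc m) = moving m (hs k0) (L *\<^sub>R e)" "stage m = moving m (slot k0) (- (L *\<^sub>R e))"
  using assms by (auto simp: stage_def moving_def vec_eq_iff dest: idx_inj)

lemma stage_mem:
  assumes "m < CARD('n)"
  shows "stage m \<in> cylinder_configs h L R K"
proof -
  obtain k0 where k0: "idx k0 = m" using idx_surj[OF assms] by blast
  show ?thesis
    unfolding stage_eq_moving(2)[OF k0] using hs_below_slot by (intro moving_mem[OF k0]) simp
qed

lemma path_component_stage_step:
  assumes "m < CARD('n)"
  shows "path_component (cylinder_configs h L R K) (stage (Suc m)) (stage m)"
proof -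
  obtain k0 where k0: "idx k0 = m" using idx_surj[OF assms] by blast
  have "path_component (cylinder_configs h L R K)
      (moving m (hs k0) (L *\<^sub>R e)) (moving m (hs k0) (- (L *\<^sub>R e)))"
  proof (rule path_component_moving)
    fix t :: real assume t: "0 \<le> t" "t \<le> 1"
    have "(1 - t) *\<^sub>R (L *\<^sub>R e) + t *\<^sub>R (- (L *\<^sub>R e)) \<in> cball 0 L"
      using t by (intro convexD_alt[OF convex_cball]) auto
    moreover have "L *\<^sub>R e + t *\<^sub>R (- (L *\<^sub>R e) - L *\<^sub>R e)
        = (1 - t) *\<^sub>R (L *\<^sub>R e) + t *\<^sub>R (- (L *\<^sub>R e))"
      by (simp add: algebra_simps)
    ultimately show "moving m (hs k0 + t * (hs k0 - hs k0))
        (L *\<^sub>R e + t *\<^sub>R (- (L *\<^sub>R e) - L *\<^sub>R e)) \<in> cylinder_configs h L R K"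
      by (intro moving_mem[OF k0]) simp
  qed
  moreover have "path_component (cylinder_configs h L R K)
      (moving m (hs k0) (- (L *\<^sub>R e))) (moving m (slot k0) (- (L *\<^sub>R e)))"
  proof (rule path_component_moving)
    fix t :: real assume t: "0 \<le> t" "t \<le> 1"
    have "hs k0 \<le> hs k0 + t * (slot k0 - hs k0) \<and> hs k0 + t * (slot k0 - hs k0) \<le> slot k0"
      using t hs_below_slot[of k0] mult_left_le_one_le[of "slot k0 - hs k0" t] by auto
    then show "moving m (hs k0 + t * (slot k0 - hs k0))
        (- (L *\<^sub>R e) + t *\<^sub>R (- (L *\<^sub>R e) - - (L *\<^sub>R e))) \<in> cylinder_configs h L R K"
      by (intro moving_mem[OF k0]) simp
  qed
  ultimately show ?thesis
    unfolding stage_eq_moving[OF k0] by (rule path_component_trans)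
qed

lemma path_component_stage_zero:
  "m \<le> CARD('n) \<Longrightarrow> path_component (cylinder_configs h L R K) (stage m) (stage 0)"
proof (induction m)
  case 0
  show ?case by (rule path_component_refl, rule stage_mem) simp
next
  case (Suc m)
  then have "path_component (cylinder_configs h L R K) (stage (Suc m)) (stage m)"
    by (intro path_component_stage_step) simp
  with Suc show ?case by (meson Suc_leD path_component_trans)
qed

lemma path_component_stage_zero_lowered:
  "path_component (cylinder_configs h L R K) (stage 0) (\<chi> k. (h + T * real (idx k), - (L *\<^sub>R e)))"
proof -
  have "stage 0 + (\<chi> k. (h - base, 0)) = (\<chi> k. (h + T * real (idx k), - (L *\<^sub>R e)))"
    by (simp add: stage_def slot_def vec_eq_iff)
  moreover have "path_component (cylinder_configs h L R K) (stage 0) (stage 0 + (\<chi> k. (h - base, 0)))"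
  proof (rule path_component_point_configs_shift)
    show "stage 0 \<in> cylinder_configs h L R K" by (rule stage_mem) simp
    fix k and t :: real assume "0 \<le> t" "t \<le> 1"
    then have "h \<le> base + t * (h - base)"
      using h_below_base mult_left_le_one_le[of "base - h" t] by (simp add: algebra_simps)
    then show "stage 0 $ k + t *\<^sub>R (h - base, 0) \<in> half_cylinder h L"
      using base_le_slot[of k] by (simp add: stage_def half_cylinder_def)
  qed
  ultimately show ?thesis by simp
qed

lemma stage_card: "stage CARD('n) = (\<chi> k. (hs k, L *\<^sub>R e))"
proof -
  have "\<not> CARD('n) \<le> idx k" for k using idx_less[of k] by linarith
  then show ?thesis by (simp add: stage_def vec_eq_iff)
qed

theorem path_component_sorted:
  "path_component (cylinder_configs h L R K)
     (\<chi> k. (hs k, L *\<^sub>R e)) (\<chi> k. (h + T * real (idx k), - (L *\<^sub>R e)))"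
  using path_component_stage_zero[of "CARD('n)"] path_component_stage_zero_lowered
  unfolding stage_card by (blast intro: path_component_trans)

end

theorem path_connected_cylinder_configs:
  assumes "0 \<le> R" "R < L"
  shows "path_connected (cylinder_configs h L R K :: ((real \<times> 'b::euclidean_space) ^ 'n::finite) set)"
proof -
  obtain e :: 'b where e: "norm e = 1"
    using nonempty_Basis norm_Basis by blast
  obtain idx :: "'n \<Rightarrow> nat" where idx: "bij_betw idx UNIV {..<CARD('n)}"
    using ex_bij_betw_finite_nat[of "UNIV :: 'n set"] by (auto simp: atLeast0LessThan)
  define T where "T = 2 * R + 1"
  define Z :: "(real \<times> 'b) ^ 'n" where "Z = (\<chi> k. (h + T * real (idx k), - (L *\<^sub>R e)))"
  have "path_component (cylinder_configs h L R K) A Z" if A: "A \<in> cylinder_configs h L R K" for A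
  proof -
    have T_nonneg: "0 \<le> T" and T_gt: "\<And>j k. j \<in> K \<Longrightarrow> k \<in> K \<Longrightarrow> j \<noteq> k \<Longrightarrow> 2 * R < T"
      using assms by (auto simp: T_def)
    have target: "(y, L *\<^sub>R e) \<in> half_cylinder h L" if "k \<in> K" "fst (A $ k) \<le> y" for k y
      using point_configsD(1)[OF A that(1)] that(2) e assms by (simp add: half_cylinder_def)
    obtain hs where hs: "\<And>k. fst (A $ k) + T \<le> hs k" "\<And>j k. j \<noteq> k \<Longrightarrow> T \<le> \<bar>hs j - hs k\<bar>"
      and levels: "path_component (cylinder_configs h L R K) A (\<chi> k. (hs k, L *\<^sub>R e))"
    proof (rule point_configs_reach_levels[OF A _ _ T_nonneg T_gt target])
      show "p + (s, 0) \<in> half_cylinder h L" if "p \<in> half_cylinder h L" "0 \<le> s" for p s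
        using that by (simp add: half_cylinder_def)
    qed (simp_all add: convex_half_cylinder, blast)
    interpret column_sort h L R T K e idx hs
    proof
      show "h \<le> hs k" if "k \<in> K" for k
        using point_configsD(1)[OF A that] hs(1)[of k] assms by (simp add: half_cylinder_def T_def)
    qed (use assms e idx hs(2) in \<open>auto simp: T_def\<close>)
    show ?thesis
      using levels path_component_sorted unfolding Z_def by (rule path_component_trans)
  qed
  then show ?thesis
    unfolding path_connected_component by (meson path_component_sym path_component_trans)
qed

lemma path_connected_cylinder_configs_preimage:
  fixes c :: "'n::finite \<Rightarrow> real \<times> 'b::euclidean_space"
  assumes "0 \<le> R" "R < L"
  shows "path_connected {x. x + (\<chi> k. c k) \<in> cylinder_configs h L R K}"
  using assms by (intro path_connected_preimage_translation path_connected_cylinder_configs)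

section \<open>Configurations of bodies\<close>

lemma translate_mono: "A \<subseteq> B \<Longrightarrow> translate A v \<subseteq> translate B v"
  unfolding translate_def by blast

lemma translate_disjoint:
  fixes A B :: "'a::real_vector set"
  shows "A \<inter> B = {} \<Longrightarrow> translate A v \<inter> translate B v = {}"
  unfolding translate_def by auto

lemma translate_cball:
  fixes c y :: "'a::real_normed_vector"
  shows "translate (cball c r) y = cball (c + y) r"
  unfolding translate_def using image_add_cball[of y c r] by (simp add: add.commute)

lemma config_space_shift:
  fixes x :: "'a::real_vector ^ 'n::finite"
  assumes x: "x \<in> config_space D S" and D: "translate D v \<subseteq> D"
  shows "x + (\<chi> k. v) \<in> config_space D S"
proof -
  have shifted: "translate (S k) ((x + (\<chi> k. v)) $ k) = translate (translate (S k) (x $ k)) v" for k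
    by (simp add: translate_def image_image add.assoc)
  show ?thesis
    unfolding config_space_def mem_Collect_eq shifted
  proof (intro CollectI conjI allI impI)
    fix k
    have "translate (S k) (x $ k) \<subseteq> D" using x by (simp add: config_space_def)
    then show "translate (translate (S k) (x $ k)) v \<subseteq> D" using translate_mono D by blast
  next
    fix j k :: 'n assume "j \<noteq> k"
    then have "translate (S j) (x $ j) \<inter> translate (S k) (x $ k) = {}"
      using x by (simp add: config_space_def)
    then show "translate (translate (S j) (x $ j)) v \<inter> translate (translate (S k) (x $ k)) v = {}"
      by (rule translate_disjoint)
  qed
qed

lemma path_component_config_space_lift:
  fixes x :: "(real \<times> 'b::real_normed_vector) ^ 'n::finite"
  assumes x: "x \<in> config_space D S" and up: "\<And>s. 0 \<le> s \<Longrightarrow> translate D (s, 0) \<subseteq> D"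
    and "0 \<le> H"
  shows "path_component (config_space D S) x (x + (\<chi> k. (H, 0)))"
proof (rule path_component_segmentI)
  fix t :: real assume "0 \<le> t" "t \<le> 1"
  then have "x + (\<chi> k. (t * H, 0)) \<in> config_space D S"
    using \<open>0 \<le> H\<close> by (intro config_space_shift[OF x up]) simp
  moreover have "x + t *\<^sub>R (\<chi> k. (H, 0)) = x + (\<chi> k. (t * H, 0))"
    by (simp add: vec_eq_iff)
  ultimately show "x + t *\<^sub>R (\<chi> k. (H, 0)) \<in> config_space D S" by simp
qed

text \<open>A common point of the moved bodies, shrunk back towards \<open>z\<close> by the factor \<open>1 + \<tau>\<close>,
  would by convexity be a common point of the original bodies.\<close>
lemma disjoint_translates_spread:
  fixes S T :: "'a::real_vector set"
  assumes conv: "convex S" "convex T" and ref: "c \<in> S" "d \<in> T"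
    and disj: "translate S a \<inter> translate T b = {}" and "0 \<le> \<tau>"
  shows "translate S (a + \<tau> *\<^sub>R (c + a - z)) \<inter> translate T (b + \<tau> *\<^sub>R (d + b - z)) = {}"
proof (rule ccontr)
  assume "translate S (a + \<tau> *\<^sub>R (c + a - z)) \<inter> translate T (b + \<tau> *\<^sub>R (d + b - z)) \<noteq> {}"
  then obtain s s' where s: "s \<in> S" "s' \<in> T"
    and meet: "s + (a + \<tau> *\<^sub>R (c + a - z)) = s' + (b + \<tau> *\<^sub>R (d + b - z))"
    unfolding translate_def by auto
  define w where "w = \<tau> / (1 + \<tau>)"
  have w: "0 \<le> w" "w \<le> 1" "(1 + \<tau>) * (1 - w) = 1" "(1 + \<tau>) * w = \<tau>"
    using \<open>0 \<le> \<tau>\<close> by (auto simp: w_def field_simps)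
  have shrink: "(1 + \<tau>) *\<^sub>R ((1 - w) *\<^sub>R p + w *\<^sub>R q + r) - \<tau> *\<^sub>R z = p + (r + \<tau> *\<^sub>R (q + r - z))"
    for p q r :: 'a
  proof -
    have "(1 + \<tau>) *\<^sub>R ((1 - w) *\<^sub>R p + w *\<^sub>R q + r)
        = ((1 + \<tau>) * (1 - w)) *\<^sub>R p + ((1 + \<tau>) * w) *\<^sub>R q + (1 + \<tau>) *\<^sub>R r"
      by (simp add: scaleR_add_right)
    then show ?thesis unfolding w(3,4) by (simp add: algebra_simps)
  qed
  have "(1 + \<tau>) *\<^sub>R ((1 - w) *\<^sub>R s + w *\<^sub>R c + a) = (1 + \<tau>) *\<^sub>R ((1 - w) *\<^sub>R s' + w *\<^sub>R d + b)"
    using shrink[of s c a] shrink[of s' d b] meet by (metis diff_add_cancel)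
  then have "(1 - w) *\<^sub>R s + w *\<^sub>R c + a = (1 - w) *\<^sub>R s' + w *\<^sub>R d + b"
    using \<open>0 \<le> \<tau>\<close> by simp
  moreover have "(1 - w) *\<^sub>R s + w *\<^sub>R c \<in> S" "(1 - w) *\<^sub>R s' + w *\<^sub>R d \<in> T"
    using conv ref s w by (auto intro: convexD_alt)
  ultimately show False
    using disj unfolding translate_def by blast
qed

lemma path_component_config_space_spread:
  fixes x :: "'a::real_normed_vector ^ 'n::finite"
  assumes x: "x \<in> config_space D S" and conv: "\<And>k. convex (S k)"
    and ref: "\<And>k. S k \<noteq> {} \<Longrightarrow> c k \<in> S k" and "0 \<le> \<tau>"
    and inside: "\<And>k t. 0 \<le> t \<Longrightarrow> t \<le> \<tau> \<Longrightarrow> translate (S k) (x $ k + t *\<^sub>R (c k + x $ k - z)) \<subseteq> D"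
  shows "path_component (config_space D S) x (x + \<tau> *\<^sub>R (\<chi> k. c k + x $ k - z))"
proof (rule path_component_segmentI)
  fix t :: real assume t: "0 \<le> t" "t \<le> 1"
  define y where "y = (\<chi> k. x $ k + (t * \<tau>) *\<^sub>R (c k + x $ k - z))"
  have "y \<in> config_space D S"
    unfolding config_space_def
  proof (intro CollectI conjI allI impI)
    fix k
    show "translate (S k) (y $ k) \<subseteq> D"
      unfolding y_def using t \<open>0 \<le> \<tau>\<close> by (simp add: inside mult_left_le_one_le)
  next
    fix j k :: 'n assume "j \<noteq> k"
    show "translate (S j) (y $ j) \<inter> translate (S k) (y $ k) = {}"
    proof (cases "S j = {} \<or> S k = {}")
      case True
      then show ?thesis by (auto simp: translate_def)
    next
      case False
      have "translate (S j) (x $ j) \<inter> translate (S k) (x $ k) = {}"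
        using x \<open>j \<noteq> k\<close> by (simp add: config_space_def)
      then show ?thesis
        unfolding y_def using False t \<open>0 \<le> \<tau>\<close>
        by (simp add: disjoint_translates_spread conv ref)
    qed
  qed
  moreover have "x + t *\<^sub>R (\<tau> *\<^sub>R (\<chi> k. c k + x $ k - z)) = y"
    by (simp add: y_def vec_eq_iff)
  ultimately show "x + t *\<^sub>R (\<tau> *\<^sub>R (\<chi> k. c k + x $ k - z)) \<in> config_space D S" by simp
qed

lemma half_cylinder_thicken:
  assumes "a \<in> half_cylinder h L" "dist a p \<le> R"
  shows "p \<in> half_cylinder (h - R) (L + R)"
proof -
  have "\<bar>fst a - fst p\<bar> \<le> R" "norm (snd a - snd p) \<le> R"
    using assms(2) dist_fst_le[of a p] dist_snd_le[of a p] by (simp_all add: dist_real_def dist_norm)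
  moreover have "norm (snd p) \<le> norm (snd a) + norm (snd a - snd p)"
    using norm_triangle_sub[of "snd p" "snd a"] by (simp add: norm_minus_commute)
  ultimately show ?thesis using assms(1) by (auto simp: half_cylinder_def)
qed

lemma config_space_if_cylinder_configs:
  fixes S :: "'n::finite \<Rightarrow> (real \<times> 'b::real_normed_vector) set"
  assumes near: "\<And>k s. s \<in> S k \<Longrightarrow> k \<in> K \<and> dist (c k) s \<le> R"
    and D: "half_cylinder (h - R) (L + R) \<subseteq> D"
    and x: "x + (\<chi> k. c k) \<in> cylinder_configs h L R K"
  shows "x \<in> config_space D S"
proof -
  define A where "A = x + (\<chi> k. c k)"
  have close: "k \<in> K \<and> dist (A $ k) (s + x $ k) \<le> R" if "s \<in> S k" for k s
    using near[OF that] by (simp add: A_def add.commute)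
  show ?thesis
    unfolding config_space_def mem_Collect_eq
  proof (intro conjI allI impI subsetI)
    fix k p assume "p \<in> translate (S k) (x $ k)"
    then obtain s where "s \<in> S k" "p = s + x $ k" by (auto simp: translate_def)
    then show "p \<in> D"
      using close half_cylinder_thicken point_configsD(1)[OF x[folded A_def]] D by blast
  next
    fix j k :: 'n assume "j \<noteq> k"
    show "translate (S j) (x $ j) \<inter> translate (S k) (x $ k) = {}"
    proof (rule ccontr)
      assume "translate (S j) (x $ j) \<inter> translate (S k) (x $ k) \<noteq> {}"
      then obtain s s' where s: "s \<in> S j" "s' \<in> S k" "s + x $ j = s' + x $ k"
        unfolding translate_def by blast
      have "dist (A $ j) (A $ k) \<le> dist (A $ j) (s + x $ j) + dist (A $ k) (s' + x $ k)"
        using s(3) by (metis dist_commute dist_triangle)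
      then have "dist (A $ j) (A $ k) \<le> R + R"
        using close[OF s(1)] close[OF s(2)] by linarith
      moreover have "2 * R < dist (A $ j) (A $ k)"
        using point_configsD(2)[OF x[folded A_def]] close[OF s(1)] close[OF s(2)] \<open>j \<noteq> k\<close>
        by blast
      ultimately show False by linarith
    qed
  qed
qed

section \<open>Convex bodies above a graph\<close>

lemma exists_expansion_factor:
  fixes d :: "'n::finite \<Rightarrow> 'n \<Rightarrow> real"
  assumes pos: "\<And>j k. P j k \<Longrightarrow> 0 < d j k"
  obtains \<tau> where "0 \<le> \<tau>" "\<And>j k. P j k \<Longrightarrow> r < (1 + \<tau>) * d j k"
proof
  define f where "f p = (if P (fst p) (snd p) then 1 / d (fst p) (snd p) else 0)" for p
  define \<tau> where "\<tau> = \<bar>r\<bar> * (\<Sum>p\<in>UNIV. f p)"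
  have f_nonneg: "0 \<le> f p" for p
    unfolding f_def using pos by (simp add: less_imp_le)
  then show "0 \<le> \<tau>" unfolding \<tau>_def by (simp add: sum_nonneg)
  fix j k assume "P j k"
  have "f (j, k) \<le> (\<Sum>p\<in>UNIV. f p)"
    using f_nonneg by (intro member_le_sum) auto
  then have "\<bar>r\<bar> * (1 / d j k) * d j k \<le> \<tau> * d j k"
    unfolding \<tau>_def f_def using pos[OF \<open>P j k\<close>] \<open>P j k\<close>
    by (intro mult_right_mono mult_left_mono) auto
  then show "r < (1 + \<tau>) * d j k" using pos[OF \<open>P j k\<close>] by (simp add: algebra_simps)
qed

lemma translate_subset_half_cylinder:
  fixes S :: "(real \<times> 'b::real_normed_vector) set"
  assumes "\<And>s. s \<in> S \<Longrightarrow> norm s \<le> B" "norm a \<le> X" "0 \<le> fst w" "norm w \<le> W"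
    and "0 \<le> t" "t \<le> \<tau>"
  shows "translate S (a + (H, 0) + t *\<^sub>R w) \<subseteq> half_cylinder (H - B - X) (B + X + \<tau> * W)"
proof
  fix p assume "p \<in> translate S (a + (H, 0) + t *\<^sub>R w)"
  then obtain s where s: "s \<in> S" "p = s + (a + (H, 0) + t *\<^sub>R w)"
    by (auto simp: translate_def)
  have "\<bar>fst s\<bar> \<le> B" "\<bar>fst a\<bar> \<le> X"
    using assms(1)[OF s(1)] assms(2) norm_fst_le[of "fst s" "snd s"] norm_fst_le[of "fst a" "snd a"]
    by simp_all
  moreover have "0 \<le> t * fst w" using assms by simp
  ultimately have "H - B - X \<le> fst p" unfolding s(2) by simp
  have "t * norm w \<le> \<tau> * W"
    using assms by (meson mult_mono norm_ge_zero order_trans)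
  then have "norm (s + a + t *\<^sub>R w) \<le> B + X + \<tau> * W"
    using assms(1)[OF s(1)] assms(2,5) norm_triangle_ineq[of s a] norm_triangle_ineq[of "s + a" "t *\<^sub>R w"]
    by simp
  moreover have "snd p = snd (s + a + t *\<^sub>R w)" unfolding s(2) by simp
  ultimately have "norm (snd p) \<le> B + X + \<tau> * W"
    by (metis norm_snd_le_norm order_trans)
  with \<open>H - B - X \<le> fst p\<close> show "p \<in> half_cylinder (H - B - X) (B + X + \<tau> * W)"
    by (simp add: half_cylinder_def)
qed

lemma homothetic_configs_in_cylinder:
  fixes q :: "'n::finite \<Rightarrow> real \<times> 'b::real_normed_vector"
  assumes "\<And>k. fst z \<le> fst (q k)" "snd z = 0" "\<And>k. norm (q k - z) \<le> W" "0 \<le> \<tau>"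
    and "h \<le> fst z + H"
    and spread: "\<And>j k. j \<in> K \<Longrightarrow> k \<in> K \<Longrightarrow> j \<noteq> k \<Longrightarrow> 2 * R < (1 + \<tau>) * dist (q j) (q k)"
  shows "(\<chi> k. z + (H, 0) + (1 + \<tau>) *\<^sub>R (q k - z)) \<in> cylinder_configs h ((1 + \<tau>) * W) R K"
proof (intro point_configsI, unfold vec_lambda_beta)
  fix k
  have "0 \<le> (1 + \<tau>) * (fst (q k) - fst z)" using assms by simp
  moreover have "norm ((1 + \<tau>) *\<^sub>R snd (q k)) \<le> (1 + \<tau>) * W"
    using assms(2-4) norm_snd_le_norm[of "q k - z"] order_trans[OF _ assms(3)[of k]]
    by (simp add: mult_left_mono)
  ultimately show "z + (H, 0) + (1 + \<tau>) *\<^sub>R (q k - z) \<in> half_cylinder h ((1 + \<tau>) * W)"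
    using assms(2,5) by (simp add: half_cylinder_def)
next
  fix j k assume "j \<in> K" "k \<in> K" "j \<noteq> k"
  have "dist (z + (H, 0) + (1 + \<tau>) *\<^sub>R (q j - z)) (z + (H, 0) + (1 + \<tau>) *\<^sub>R (q k - z))
      = (1 + \<tau>) * dist (q j) (q k)"
  proof -
    have "z + (H, 0) + (1 + \<tau>) *\<^sub>R (q j - z) - (z + (H, 0) + (1 + \<tau>) *\<^sub>R (q k - z))
        = (1 + \<tau>) *\<^sub>R (q j - q k)"
      by (simp add: algebra_simps)
    then show ?thesis using \<open>0 \<le> \<tau>\<close> by (simp add: dist_norm)
  qed
  then show "2 * R < dist (z + (H, 0) + (1 + \<tau>) *\<^sub>R (q j - z)) (z + (H, 0) + (1 + \<tau>) *\<^sub>R (q k - z))"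
    using spread[OF \<open>j \<in> K\<close> \<open>k \<in> K\<close> \<open>j \<noteq> k\<close>] by simp
qed

text \<open>The centre \<open>z\<close> of the homothety lies below all reference points, so spreading only raises
  the bodies, and the lift by \<open>H\<close> keeps them above the graph throughout.\<close>
lemma path_component_lift_spread_into_cylinder:
  fixes D :: "(real \<times> 'b::real_normed_vector) set" and S :: "'n::finite \<Rightarrow> (real \<times> 'b) set"
  assumes x: "x \<in> config_space D S" and up: "\<And>s. 0 \<le> s \<Longrightarrow> translate D (s, 0) \<subseteq> D"
    and conv: "\<And>k. convex (S k)" and ref: "\<And>k. S k \<noteq> {} \<Longrightarrow> c k \<in> S k"
    and B: "\<And>k s. s \<in> S k \<Longrightarrow> norm s \<le> B" and X: "\<And>k. norm (x $ k) \<le> X"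
    and z: "\<And>k. fst z \<le> fst (c k + x $ k)" "snd z = 0"
    and W: "\<And>k. norm (c k + x $ k - z) \<le> W"
    and \<tau>: "0 \<le> \<tau>" "\<And>j k. j \<in> K \<Longrightarrow> k \<in> K \<Longrightarrow> j \<noteq> k \<Longrightarrow>
      2 * R < (1 + \<tau>) * dist (c j + x $ j) (c k + x $ k)"
    and h1: "half_cylinder h1 (B + X + \<tau> * W) \<subseteq> D"
  shows "\<exists>x'. x' + (\<chi> k. c k) \<in> cylinder_configs h ((1 + \<tau>) * W) R K \<and>
    path_component (config_space D S) x x'"
proof -
  define H where "H = max 0 (max (h1 + B + X) (h - fst z))"
  define x1 where "x1 = x + (\<chi> k. (H, 0))"
  define x2 where "x2 = x1 + \<tau> *\<^sub>R (\<chi> k. c k + x1 $ k - (z + (H, 0)))"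
  have relative: "c k + x1 $ k - (z + (H, 0)) = c k + x $ k - z" for k
    by (simp add: x1_def algebra_simps)
  have lift: "path_component (config_space D S) x x1"
    unfolding x1_def by (rule path_component_config_space_lift[OF x up]) (auto simp: H_def)
  have spread: "path_component (config_space D S) x1 x2"
    unfolding x2_def
  proof (rule path_component_config_space_spread[OF _ conv ref \<tau>(1)])
    show "x1 \<in> config_space D S"
      unfolding x1_def by (rule config_space_shift[OF x up]) (simp add: H_def)
    fix k and t :: real assume "0 \<le> t" "t \<le> \<tau>"
    then have "translate (S k) (x $ k + (H, 0) + t *\<^sub>R (c k + x $ k - z))
        \<subseteq> half_cylinder (H - B - X) (B + X + \<tau> * W)"
      using B X z(1) W by (intro translate_subset_half_cylinder) auto
    also have "\<dots> \<subseteq> D"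
      using h1 half_cylinder_mono[of h1 "H - B - X"] by (force simp: H_def)
    finally show "translate (S k) (x1 $ k + t *\<^sub>R (c k + x1 $ k - (z + (H, 0)))) \<subseteq> D"
      by (simp add: relative x1_def)
  qed
  have "x2 + (\<chi> k. c k) = (\<chi> k. z + (H, 0) + (1 + \<tau>) *\<^sub>R (c k + x $ k - z))"
    by (simp add: x2_def relative vec_eq_iff) (simp add: x1_def algebra_simps)
  moreover have "(\<chi> k. z + (H, 0) + (1 + \<tau>) *\<^sub>R (c k + x $ k - z)) \<in> cylinder_configs h ((1 + \<tau>) * W) R K"
    using z W \<tau> by (intro homothetic_configs_in_cylinder) (auto simp: H_def)
  ultimately have "x2 + (\<chi> k. c k) \<in> cylinder_configs h ((1 + \<tau>) * W) R K" by simp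
  then show ?thesis using path_component_trans[OF lift spread] by blast
qed

lemma config_space_points_distinct:
  assumes "x \<in> config_space D S" "j \<noteq> k" "a \<in> S j" "b \<in> S k"
  shows "a + x $ j \<noteq> b + x $ k"
  using assms unfolding config_space_def translate_def by blast

text \<open>The width \<open>L\<close> may not depend on the height \<open>h\<close>: the graph is only bounded over bounded sets,
  so the height can be fixed only once the width is known.\<close>
lemma config_space_reaches_cylinder:
  fixes D :: "(real \<times> 'b::real_normed_vector) set" and S :: "'n::finite \<Rightarrow> (real \<times> 'b) set"
  assumes x: "x \<in> config_space D S" and up: "\<And>s. 0 \<le> s \<Longrightarrow> translate D (s, 0) \<subseteq> D"
    and high: "\<And>L. \<exists>h. half_cylinder h L \<subseteq> D"
    and conv: "\<And>k. convex (S k)" and bnd: "\<And>k. bounded (S k)"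
    and ref: "\<And>k. S k \<noteq> {} \<Longrightarrow> c k \<in> S k"
  shows "\<exists>L. \<forall>h. \<exists>x'. x' + (\<chi> k. c k) \<in> cylinder_configs h L R {k. S k \<noteq> {}} \<and>
    path_component (config_space D S) x x'"
proof -
  define K where "K = {k. S k \<noteq> {}}"
  define q where "q k = c k + x $ k" for k
  have "0 < dist (q j) (q k)" if "j \<in> K \<and> k \<in> K \<and> j \<noteq> k" for j k
    using that ref config_space_points_distinct[OF x] unfolding K_def q_def by simp
  then obtain \<tau> where \<tau>: "0 \<le> \<tau>"
    "\<And>j k. j \<in> K \<and> k \<in> K \<and> j \<noteq> k \<Longrightarrow> 2 * R < (1 + \<tau>) * dist (q j) (q k)"
    using exists_expansion_factor[where P = "\<lambda>j k. j \<in> K \<and> k \<in> K \<and> j \<noteq> k"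
        and d = "\<lambda>j k. dist (q j) (q k)" and r = "2 * R"] by blast
  obtain B where B: "\<And>k s. s \<in> S k \<Longrightarrow> norm s \<le> B"
  proof -
    have "bounded (\<Union>k. S k)" using bnd by (simp add: bounded_UN)
    then show thesis using that unfolding bounded_iff by blast
  qed
  define X where "X = (\<Sum>k\<in>UNIV. norm (x $ k))"
  define z :: "real \<times> 'b" where "z = (- (\<Sum>k\<in>UNIV. \<bar>fst (q k)\<bar>), 0)"
  define W where "W = (\<Sum>k\<in>UNIV. norm (q k - z))"
  have X: "norm (x $ k) \<le> X" for k
    unfolding X_def by (rule member_le_sum) auto
  have z: "fst z \<le> fst (q k)" "snd z = 0" for k
  proof -
    have "\<bar>fst (q k)\<bar> \<le> (\<Sum>k\<in>UNIV. \<bar>fst (q k)\<bar>)" by (rule member_le_sum) auto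
    then show "fst z \<le> fst (q k)" "snd z = 0" by (simp_all add: z_def)
  qed
  have W: "norm (q k - z) \<le> W" for k
    unfolding W_def by (rule member_le_sum) auto
  have "\<exists>x'. x' + (\<chi> k. c k) \<in> cylinder_configs h ((1 + \<tau>) * W) R K \<and>
      path_component (config_space D S) x x'" for h
  proof -
    obtain h1 where "half_cylinder h1 (B + X + \<tau> * W) \<subseteq> D" using high by blast
    then show ?thesis
      using z W \<tau> unfolding q_def
      by (intro path_component_lift_spread_into_cylinder[OF x up conv ref B X]) simp_all
  qed
  then show ?thesis unfolding K_def by blast
qed

lemma exists_reference_points:
  fixes S :: "'n::finite \<Rightarrow> 'a::metric_space set"
  assumes "\<And>k. bounded (S k)"
  obtains c R where "0 \<le> R" "\<And>k. S k \<noteq> {} \<Longrightarrow> c k \<in> S k"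
    and "\<And>k s. s \<in> S k \<Longrightarrow> dist (c k) s \<le> R"
proof
  define c where "c k = (SOME s. s \<in> S k)" for k
  define R where "R = Max (range (\<lambda>k. diameter (S k)))"
  have diam: "diameter (S k) \<le> R" for k
    unfolding R_def by (rule Max_ge) auto
  then show "0 \<le> R" using diameter_ge_0[OF assms] by (meson order_trans)
  show ref: "c k \<in> S k" if "S k \<noteq> {}" for k
    using that unfolding c_def by (metis ex_in_conv someI_ex)
  show "dist (c k) s \<le> R" if "s \<in> S k" for k s
    using that ref diameter_bounded_bound[OF assms, of "c k" k s] diam[of k] by fastforce
qed

theorem path_connected_config_space_convex:
  fixes D :: "(real \<times> 'b::euclidean_space) set" and S :: "'n::finite \<Rightarrow> (real \<times> 'b) set"
  assumes up: "\<And>s. 0 \<le> s \<Longrightarrow> translate D (s, 0) \<subseteq> D"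
    and high: "\<And>L. \<exists>h. half_cylinder h L \<subseteq> D"
    and conv: "\<And>k. convex (S k)" and bnd: "\<And>k. bounded (S k)"
  shows "path_connected (config_space D S)"
proof -
  obtain c R where "0 \<le> R" and ref: "\<And>k. S k \<noteq> {} \<Longrightarrow> c k \<in> S k"
    and near: "\<And>k s. s \<in> S k \<Longrightarrow> dist (c k) s \<le> R"
    using exists_reference_points[where S = S, OF bnd] by metis
  define K where "K = {k. S k \<noteq> {}}"
  let ?X = "config_space D S"
  have reach: "\<exists>L. \<forall>h. \<exists>x'. x' + (\<chi> k. c k) \<in> cylinder_configs h L R K \<and> path_component ?X x x'"
    if "x \<in> ?X" for x
    using config_space_reaches_cylinder[OF that up high conv bnd ref] unfolding K_def by blast
  show ?thesis
    unfolding path_connected_component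
  proof (intro ballI)
    fix x y assume "x \<in> ?X" "y \<in> ?X"
    then obtain Lx Ly where
      Lx: "\<forall>h. \<exists>x'. x' + (\<chi> k. c k) \<in> cylinder_configs h Lx R K \<and> path_component ?X x x'" and
      Ly: "\<forall>h. \<exists>y'. y' + (\<chi> k. c k) \<in> cylinder_configs h Ly R K \<and> path_component ?X y y'"
      using reach by meson
    define L where "L = max (max Lx Ly) (R + 1)"
    obtain h where h: "half_cylinder h (L + R) \<subseteq> D" using high by blast
    define G where "G = {z. z + (\<chi> k. c k) \<in> cylinder_configs (h + R) L R K}"
    have G_sub: "G \<subseteq> ?X"
    proof
      fix z assume "z \<in> G"
      then show "z \<in> ?X"
        using h near by (intro config_space_if_cylinder_configs[where S = S and K = K])
          (auto simp: G_def K_def)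
    qed
    have widen: "cylinder_configs (h + R) L' R K \<subseteq> cylinder_configs (h + R) L R K" if "L' \<le> L" for L'
      using that half_cylinder_mono[of "h + R" "h + R" L' L] by (intro point_configs_mono) auto
    obtain x' y' where "x' \<in> G" "y' \<in> G" "path_component ?X x x'" "path_component ?X y y'"
      using Lx[rule_format, of "h + R"] Ly[rule_format, of "h + R"] widen[of Lx] widen[of Ly]
      unfolding G_def L_def by fastforce
    moreover have "path_connected G"
      unfolding G_def using \<open>0 \<le> R\<close>
      by (intro path_connected_cylinder_configs_preimage) (auto simp: L_def)
    ultimately show "path_component ?X x y"
      using G_sub path_component_via_path_connected_subset by blast
  qed
qed

lemma upper_semicontinuous_bounded_above:
  assumes "upper_semicontinuous g" "compact C"
  obtains M where "\<And>y. y \<in> C \<Longrightarrow> g y \<le> M"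
proof -
  have "C \<subseteq> (\<Union>n. {y. g y < real n})"
    by (auto intro: reals_Archimedean2)
  moreover have "\<And>n. open {y. g y < real n}"
    using assms(1) unfolding upper_semicontinuous_def by blast
  ultimately obtain F where "finite F" "C \<subseteq> (\<Union>n\<in>F. {y. g y < real n})"
    using compactE_image[OF assms(2)] by metis
  then have "g y \<le> real (Max (insert 0 F))" if "y \<in> C" for y
    using that by (force intro: less_imp_le order.strict_trans2)
  then show thesis using that by blast
qed

lemma translate_epigraph_up:
  fixes g :: "'b::real_normed_vector \<Rightarrow> real"
  shows "0 \<le> s \<Longrightarrow> translate {x. g (snd x) < fst x} (s, 0) \<subseteq> {x. g (snd x) < fst x}"
  by (auto simp: translate_def)

lemma epigraph_contains_half_cylinder:
  fixes g :: "'b::euclidean_space \<Rightarrow> real"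
  assumes "upper_semicontinuous g"
  shows "\<exists>h. half_cylinder h L \<subseteq> {x. g (snd x) < fst x}"
proof -
  obtain M where "\<And>y. y \<in> cball 0 L \<Longrightarrow> g y \<le> M"
    using upper_semicontinuous_bounded_above[OF assms compact_cball] by blast
  then have "half_cylinder (M + 1) L \<subseteq> {x. g (snd x) < fst x}"
    by (force simp: half_cylinder_def)
  then show ?thesis ..
qed

section \<open>Balls in a half-tube\<close>

lemma cball_subset_translate:
  fixes p v :: "'a::real_normed_vector"
  assumes "cball p r \<subseteq> D" "translate D v \<subseteq> D"
  shows "cball (p + v) r \<subseteq> D"
  using translate_mono[OF assms(1), of v] assms(2) by (simp add: translate_cball)

lemma cball_disjoint_iff:
  fixes a b :: "'a::real_normed_vector"
  assumes "0 \<le> r" "0 \<le> s"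
  shows "cball a r \<inter> cball b s = {} \<longleftrightarrow> r + s < dist a b"
proof
  assume disj: "cball a r \<inter> cball b s = {}"
  show "r + s < dist a b"
  proof (rule ccontr)
    assume "\<not> r + s < dist a b"
    then have d: "dist a b \<le> r + s" by simp
    define p where "p = a + (r / (r + s)) *\<^sub>R (b - a)"
    have "dist a p \<le> r \<and> dist b p \<le> s"
    proof (cases "r + s = 0")
      case True
      then show ?thesis using assms d by (simp add: p_def)
    next
      case False
      then have rs: "0 < r + s" using assms by linarith
      have "b - p = (1 - r / (r + s)) *\<^sub>R (b - a)"
        by (simp add: p_def algebra_simps)
      also have "1 - r / (r + s) = s / (r + s)"
        using rs by (simp add: field_simps)
      finally have "b - p = (s / (r + s)) *\<^sub>R (b - a)" .
      moreover have "dist a p = r / (r + s) * dist a b"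
        using assms rs by (simp add: p_def dist_norm norm_minus_commute)
      ultimately have "dist a p = r / (r + s) * dist a b" "dist b p = s / (r + s) * dist a b"
        using assms rs by (simp_all add: dist_norm norm_minus_commute)
      moreover have "r / (r + s) * dist a b \<le> r" "s / (r + s) * dist a b \<le> s"
        using assms rs mult_left_mono[OF d, of r] mult_left_mono[OF d, of s]
        by (simp_all add: field_simps distrib_left)
      ultimately show ?thesis by simp
    qed
    then show False using disj by (auto simp: dist_commute)
  qed
qed (rule disjoint_cballI)

text \<open>A ball of negative radius is empty and constrains nothing.\<close>
lemma config_space_cballs:
  fixes S :: "'n::finite \<Rightarrow> 'a::real_normed_vector set"
  assumes "\<And>k. S k = cball (c k) (r k)"
  shows "config_space D S = {x. x + (\<chi> k. c k)
    \<in> point_configs {k. 0 \<le> r k} (\<lambda>k. {p. cball p (r k) \<subseteq> D}) (\<lambda>j k. r j + r k)}"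
proof -
  have balls: "translate (S k) (x $ k) = cball ((x + (\<chi> k. c k)) $ k) (r k)" for x k
    by (simp add: assms translate_cball add.commute)
  have disjoint: "cball a (r j) \<inter> cball b (r k) = {} \<longleftrightarrow>
      (0 \<le> r j \<longrightarrow> 0 \<le> r k \<longrightarrow> r j + r k < dist a b)" for a b :: 'a and j k
    using cball_disjoint_iff[of "r j" "r k" a b] by (cases "r j < 0 \<or> r k < 0") auto
  have inside: "cball a (r k) \<subseteq> D \<longleftrightarrow> (0 \<le> r k \<longrightarrow> cball a (r k) \<subseteq> D)" for a k
    by (cases "r k < 0") auto
  show ?thesis
    unfolding config_space_def point_configs_def balls disjoint
    by (subst inside) auto
qed

lemma convex_cball_centres:
  fixes D :: "'a::real_normed_vector set"
  assumes "convex D"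
  shows "convex {p. cball p r \<subseteq> D}"
proof (rule convexI)
  fix p q and u v :: real
  assume pq: "p \<in> {p. cball p r \<subseteq> D}" "q \<in> {p. cball p r \<subseteq> D}" and uv: "0 \<le> u" "0 \<le> v" "u + v = 1"
  show "u *\<^sub>R p + v *\<^sub>R q \<in> {p. cball p r \<subseteq> D}"
  proof (intro CollectI subsetI)
    fix y assume "y \<in> cball (u *\<^sub>R p + v *\<^sub>R q) r"
    define d where "d = y - (u *\<^sub>R p + v *\<^sub>R q)"
    have "p + d \<in> D" "q + d \<in> D"
      using pq \<open>y \<in> cball _ r\<close> by (auto simp: d_def dist_norm norm_minus_commute)
    then have "u *\<^sub>R (p + d) + v *\<^sub>R (q + d) \<in> D"
      using convexD[OF assms _ _ uv] by blast
    moreover have "u *\<^sub>R (p + d) + v *\<^sub>R (q + d) = u *\<^sub>R p + v *\<^sub>R q + (u + v) *\<^sub>R d"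
      by (simp add: algebra_simps)
    ultimately show "y \<in> D" using uv(3) by (simp add: d_def)
  qed
qed

definition tube :: "(real \<times> 'b::real_normed_vector) set" where
  "tube = {x. 0 < fst x \<and> (norm (snd x))\<^sup>2 < 1}"

lemma mem_tube: "x \<in> tube \<longleftrightarrow> 0 < fst x \<and> norm (snd x) < 1"
  by (simp add: tube_def power_less_one_iff abs_less_iff)

lemma convex_tube: "convex tube"
proof -
  have "tube = fst -` {0<..} \<inter> snd -` ball 0 1"
    by (auto simp: mem_tube)
  then show ?thesis
    by (metis convex_Int convex_linear_vimage convex_ball convex_real_interval(3)
        bounded_linear.linear bounded_linear_fst bounded_linear_snd)
qed

lemma translate_tube_up: "0 \<le> s \<Longrightarrow> translate tube (s, 0) \<subseteq> tube"
  by (auto simp: translate_def mem_tube)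

lemma half_cylinder_subset_tube: "0 < h \<Longrightarrow> L < 1 \<Longrightarrow> half_cylinder h L \<subseteq> tube"
  by (auto simp: half_cylinder_def mem_tube)

lemma cball_in_tube_above:
  assumes "0 \<le> r" "cball p r \<subseteq> tube"
  shows "r < fst p"
proof -
  have "p - (r, 0) \<in> cball p r" using assms(1) by (simp add: dist_norm)
  then have "p - (r, 0) \<in> tube" using assms(2) by blast
  then show ?thesis by (simp add: mem_tube)
qed

lemma cball_subset_tube:
  fixes r y :: real
  assumes "0 \<le> r" "r < y" "r < 1"
  shows "cball ((y, 0) :: real \<times> 'b::real_normed_vector) r \<subseteq> tube"
proof
  fix p :: "real \<times> 'b" assume "p \<in> cball (y, 0) r"
  then have "p \<in> half_cylinder (y - r) (0 + r)"
    by (intro half_cylinder_thicken[of "(y, 0)" y 0]) (auto simp: half_cylinder_def)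
  then show "p \<in> tube" using assms half_cylinder_subset_tube[of "y - r" "0 + r"] by auto
qed

lemma tube_centres_reach_cylinder:
  fixes A :: "(real \<times> 'b::real_normed_vector) ^ 'n::finite"
  assumes A: "A \<in> point_configs K (\<lambda>k. {p. cball p (r k) \<subseteq> tube}) (\<lambda>j k. r j + r k)"
    and radii: "\<And>k. k \<in> K \<Longrightarrow> 0 \<le> r k \<and> r k \<le> R" "R < 1/2"
  shows "\<exists>B \<in> cylinder_configs (1/2) (1/2) R K.
    path_component (point_configs K (\<lambda>k. {p. cball p (r k) \<subseteq> tube}) (\<lambda>j k. r j + r k)) A B"
proof -
  have above: "r k < fst (A $ k)" if "k \<in> K" for k
    using point_configsD(1)[OF A that] radii(1)[OF that] by (auto intro: cball_in_tube_above)
  obtain hs where hs: "\<And>k. fst (A $ k) + 2 \<le> hs k" "\<And>j k. j \<noteq> k \<Longrightarrow> 2 \<le> \<bar>hs j - hs k\<bar>"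
    and path: "path_component (point_configs K (\<lambda>k. {p. cball p (r k) \<subseteq> tube}) (\<lambda>j k. r j + r k))
      A (\<chi> k. (hs k, 0))"
  proof (rule point_configs_reach_levels[OF A])
    show "p + (s, 0) \<in> {p. cball p (r k) \<subseteq> tube}" if "p \<in> {p. cball p (r k) \<subseteq> tube}" "0 \<le> s" for k p s
      using that cball_subset_translate translate_tube_up by blast
    show "convex {p. cball p (r k) \<subseteq> tube}" for k
      by (rule convex_cball_centres[OF convex_tube])
    show "r j + r k < 2" if "j \<in> K" "k \<in> K" for j k
      using radii(1)[OF that(1)] radii(1)[OF that(2)] radii(2) by linarith
    show "(y, 0) \<in> {p. cball p (r k) \<subseteq> tube}" if "k \<in> K" "fst (A $ k) \<le> y" for k y
      using above[OF that(1)] that(2) radii(1)[OF that(1)] radii(2) by (simp add: cball_subset_tube)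
  qed (simp_all, blast)
  have "(\<chi> k. (hs k, 0)) \<in> cylinder_configs (1/2) (1/2) R K"
  proof (intro point_configsI, unfold vec_lambda_beta)
    show "(hs k, 0) \<in> half_cylinder (1/2) (1/2)" if "k \<in> K" for k
      using above[OF that] radii(1)[OF that] hs(1)[of k] by (simp add: half_cylinder_def)
    show "2 * R < dist (hs j, 0) (hs k, 0)" if "j \<noteq> k" for j k
      using hs(2)[OF that] radii(2) by (simp add: dist_Pair_Pair dist_real_def)
  qed
  with path show ?thesis by blast
qed

theorem path_connected_config_space_balls_in_tube:
  fixes S :: "'n::finite \<Rightarrow> (real \<times> 'b::euclidean_space) set"
  assumes S: "\<And>k. S k = cball (c k) (r k)" and small: "\<And>k. r k < 1/2"
  shows "path_connected (config_space tube S)"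
proof -
  define K where "K = {k. 0 \<le> r k}"
  define R where "R = Max (insert 0 (range r))"
  have R_ge: "0 \<le> R" "\<And>k. r k \<le> R"
    unfolding R_def by (rule Max_ge; simp)+
  have "R \<in> insert 0 (range r)"
    unfolding R_def by (rule Max_in) auto
  then have R: "0 \<le> R" "R < 1/2" "\<And>k. r k \<le> R"
    using small R_ge by auto
  let ?P = "point_configs K (\<lambda>k. {p. cball p (r k) \<subseteq> tube}) (\<lambda>j k. r j + r k)"
  have config: "config_space tube S = {x. x + (\<chi> k. c k) \<in> ?P}"
    unfolding K_def by (rule config_space_cballs[OF S])
  define G where "G = {x. x + (\<chi> k. c k) \<in> cylinder_configs (1/2) (1/2) R K}"
  show ?thesis
  proof (rule path_connected_if_reaches_subset)
    show "G \<subseteq> config_space tube S"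
    proof
      fix x assume "x \<in> G"
      moreover have "k \<in> K \<and> dist (c k) s \<le> R" if "s \<in> S k" for k s
      proof -
        have "dist (c k) s \<le> r k" using that by (simp add: S)
        moreover from this have "0 \<le> r k" by (meson order_trans zero_le_dist)
        ultimately show ?thesis using R(3)[of k] unfolding K_def by auto
      qed
      ultimately show "x \<in> config_space tube S"
        using R half_cylinder_subset_tube[of "1/2 - R" "1/2 + R"] unfolding G_def
        by (intro config_space_if_cylinder_configs[where S = S]) auto
    qed
    show "path_connected G"
      unfolding G_def using R by (intro path_connected_cylinder_configs_preimage) auto
    fix x assume "x \<in> config_space tube S"
    then have "x + (\<chi> k. c k) \<in> ?P" unfolding config by simp
    then obtain B where "B \<in> cylinder_configs (1/2) (1/2) R K" "path_component ?P (x + (\<chi> k. c k)) B"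
      using tube_centres_reach_cylinder R unfolding K_def by blast
    then show "\<exists>y\<in>G. path_component (config_space tube S) x y"
      unfolding config G_def using path_component_preimage_translation by fastforce
  qed
qed

theorem lemma3p2:
  fixes D :: "(real \<times> 'b::euclidean_space) set"
    and S :: "'n::finite \<Rightarrow> (real \<times> 'b) set"
  assumes "open D" and "connected D"
    and "\<And>k. closed (S k)" and "\<And>k. bounded (S k)"
    and "(\<exists>g :: 'b \<Rightarrow> real. upper_semicontinuous g \<and>
              D = {x. fst x > g (snd x)} \<and> (\<forall>k. convex (S k)))
         \<or> (D = {x. fst x > 0 \<and> (norm (snd x))\<^sup>2 < 1} \<and>
              (\<forall>k. (\<exists>c r. S k = cball c r) \<and> diameter (S k) < 1))"
  shows "path_connected (config_space D S)"
  using assms(5)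
proof (elim disjE exE conjE)
  fix g :: "'b \<Rightarrow> real"
  assume g: "upper_semicontinuous g" and D: "D = {x. fst x > g (snd x)}" and "\<forall>k. convex (S k)"
  then show ?thesis
    unfolding D using assms(4)
    by (intro path_connected_config_space_convex translate_epigraph_up
        epigraph_contains_half_cylinder[OF g]) auto
next
  assume D: "D = {x. fst x > 0 \<and> (norm (snd x))\<^sup>2 < 1}"
    and balls: "\<forall>k. (\<exists>c r. S k = cball c r) \<and> diameter (S k) < 1"
  then obtain c r where S: "\<And>k. S k = cball (c k) (r k)" by metis
  have "r k < 1/2" for k
  proof -
    have "diameter (cball (c k) (r k)) < 1" using balls by (simp flip: S)
    then show ?thesis by (auto split: if_splits)
  qed
  then show ?thesis
    unfolding D tube_def[symmetric] by (rule path_connected_config_space_balls_in_tube[OF S])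
qed

end
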